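(* Let $X_1,\dots,X_n$ be mutually independent random variables with given distributions on ranges $D_1,\dots,D_n$ and product distribution $\mu$, and let $A_1,\dots,A_m$ be events, $A_i$ determined by the variables indexed by $\mathrm{vbl}(A_i)\subseteq[n]$, with dependency graph $G$ on $[m]$ (distinct $i,j$ adjacent iff $\mathrm{vbl}(A_i)\cap\mathrm{vbl}(A_j)\neq\emptyset$); for $S\subseteq[m]$ let $\Gamma^+(S)$ be $S$ together with its neighbours in $G$. Run the General Partial Rejection Sampling algorithm: draw all variables independently; in round $t=1,2,\dots$, with current assignment $\sigma_t$, if no $A_i$ occurs stop and output $\sigma_t$; otherwise let $S_t=\mathrm{Res}(\sigma_t)$ and independently resample all variables in $\bigcup_{i\in S_t}\mathrm{vbl}(A_i)$, giving $\sigma_{t+1}$. Let $\ell\ge1$ and let $S_1,\dots,S_\ell$ be a possible log (the algorithm has not stopped in the first $\ell$ rounds and its resampling sets are $S_1,\dots,S_\ell$, an event of positive probability). Conditioned on this log, $\sigma_{\ell+1}$ is distributed as $\mu$ conditioned on $\bigwedge_{i\notin\Gamma^+(S_\ell)}\overline{A_i}$.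
   Context: Notation: $\mathrm{Bad}(\sigma)=\{i:\sigma\in A_i\}$; $\partial S=\{i\notin S: i\text{ adjacent to some }j\in S\}$; $\mathrm{vbl}(S)=\bigcup_{i\in S}\mathrm{vbl}(A_i)$. We write $A_i\cap\sigma_S=\emptyset$ if either $\mathrm{vbl}(A_i)\cap\mathrm{vbl}(S)=\emptyset$ or no assignment agreeing with $\sigma$ on $\mathrm{vbl}(A_i)\cap\mathrm{vbl}(S)$ belongs to $A_i$; otherwise $A_i\cap\sigma_S\ne\emptyset$. $\mathrm{Res}(\sigma)$ is the output of: start with $R=\mathrm{Bad}(\sigma)$, $N=\emptyset$; while $\partial R\setminus N\neq\emptyset$, for each $i\in\partial R\setminus N$ (with $R$ the current set) put $i$ into $R$ if $A_i\cap\sigma_R\ne\emptyset$ and into $N$ otherwise; output $R$. *)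

theory Defs
  imports "HOL-Probability.Probability" "HOL-Library.While_Combinator"
begin

text \<open>Variables X_0..X_{n-1} (indexed by {..<n}) with distributions p j; assignments are
  functions nat => 'a. Events A_0..A_{m-1} (indexed by {..<m}) with variable sets vbl i.\<close>

definition mu :: "nat \<Rightarrow> (nat \<Rightarrow> 'a pmf) \<Rightarrow> (nat \<Rightarrow> 'a) pmf" where
  "mu n p = Pi_pmf {..<n} undefined p"

definition Bad :: "nat \<Rightarrow> (nat \<Rightarrow> (nat \<Rightarrow> 'a) set) \<Rightarrow> (nat \<Rightarrow> 'a) \<Rightarrow> nat set" where
  "Bad m A \<sigma> = {i \<in> {..<m}. \<sigma> \<in> A i}"

definition adj :: "(nat \<Rightarrow> nat set) \<Rightarrow> nat \<Rightarrow> nat \<Rightarrow> bool" where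
  "adj vbl i j \<longleftrightarrow> i \<noteq> j \<and> vbl i \<inter> vbl j \<noteq> {}"

definition bdry :: "nat \<Rightarrow> (nat \<Rightarrow> nat set) \<Rightarrow> nat set \<Rightarrow> nat set" where
  "bdry m vbl S = {i \<in> {..<m}. i \<notin> S \<and> (\<exists>j\<in>S. adj vbl i j)}"

definition Gamma_plus :: "nat \<Rightarrow> (nat \<Rightarrow> nat set) \<Rightarrow> nat set \<Rightarrow> nat set" where
  "Gamma_plus m vbl S = S \<union> bdry m vbl S"

definition vbls :: "(nat \<Rightarrow> nat set) \<Rightarrow> nat set \<Rightarrow> nat set" where
  "vbls vbl S = \<Union> (vbl ` S)"

text \<open>compat ... i sigma S  means  A_i \<inter> sigma_S \<noteq> {}\<close>
definition compat :: "nat \<Rightarrow> (nat \<Rightarrow> 'a pmf) \<Rightarrow> (nat \<Rightarrow> nat set) \<Rightarrow> (nat \<Rightarrow> (nat \<Rightarrow> 'a) set)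
    \<Rightarrow> nat \<Rightarrow> (nat \<Rightarrow> 'a) \<Rightarrow> nat set \<Rightarrow> bool" where
  "compat n p vbl A i \<sigma> S \<longleftrightarrow>
     vbl i \<inter> vbls vbl S \<noteq> {} \<and>
     (\<exists>\<tau>. (\<forall>j<n. \<tau> j \<in> set_pmf (p j)) \<and> (\<forall>j \<in> vbl i \<inter> vbls vbl S. \<tau> j = \<sigma> j) \<and> \<tau> \<in> A i)"

definition res_inner :: "nat \<Rightarrow> (nat \<Rightarrow> 'a pmf) \<Rightarrow> (nat \<Rightarrow> nat set) \<Rightarrow> (nat \<Rightarrow> (nat \<Rightarrow> 'a) set)
    \<Rightarrow> (nat \<Rightarrow> 'a) \<Rightarrow> nat \<Rightarrow> nat set \<times> nat set \<Rightarrow> nat set \<times> nat set" where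
  "res_inner n p vbl A \<sigma> i RN =
     (if compat n p vbl A i \<sigma> (fst RN) then (insert i (fst RN), snd RN) else (fst RN, insert i (snd RN)))"

text \<open>One pass of the while loop: the for-loop over \<partial>R - N (computed at the start of the pass),
  processed in increasing index order, each test using the current R.\<close>
definition res_step :: "nat \<Rightarrow> nat \<Rightarrow> (nat \<Rightarrow> 'a pmf) \<Rightarrow> (nat \<Rightarrow> nat set) \<Rightarrow> (nat \<Rightarrow> (nat \<Rightarrow> 'a) set)
    \<Rightarrow> (nat \<Rightarrow> 'a) \<Rightarrow> nat set \<times> nat set \<Rightarrow> nat set \<times> nat set" where
  "res_step n m p vbl A \<sigma> RN =
     fold (res_inner n p vbl A \<sigma>) (sorted_list_of_set (bdry m vbl (fst RN) - snd RN)) RN"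

definition Res :: "nat \<Rightarrow> nat \<Rightarrow> (nat \<Rightarrow> 'a pmf) \<Rightarrow> (nat \<Rightarrow> nat set) \<Rightarrow> (nat \<Rightarrow> (nat \<Rightarrow> 'a) set)
    \<Rightarrow> (nat \<Rightarrow> 'a) \<Rightarrow> nat set" where
  "Res n m p vbl A \<sigma> =
     fst (while (\<lambda>RN. bdry m vbl (fst RN) - snd RN \<noteq> {}) (res_step n m p vbl A \<sigma>) (Bad m A \<sigma>, {}))"

definition gprs_step :: "nat \<Rightarrow> nat \<Rightarrow> (nat \<Rightarrow> 'a pmf) \<Rightarrow> (nat \<Rightarrow> nat set) \<Rightarrow> (nat \<Rightarrow> (nat \<Rightarrow> 'a) set)
    \<Rightarrow> (nat \<Rightarrow> 'a) \<Rightarrow> (nat \<Rightarrow> 'a) pmf" where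
  "gprs_step n m p vbl A \<sigma> =
     (if Bad m A \<sigma> = {} then return_pmf \<sigma>
      else map_pmf (\<lambda>\<tau> j. if j \<in> vbls vbl (Res n m p vbl A \<sigma>) then \<tau> j else \<sigma> j) (mu n p))"

text \<open>gprs_run ... k is the joint law of the list [sigma_1, ..., sigma_(k+1)].\<close>
primrec gprs_run :: "nat \<Rightarrow> nat \<Rightarrow> (nat \<Rightarrow> 'a pmf) \<Rightarrow> (nat \<Rightarrow> nat set) \<Rightarrow> (nat \<Rightarrow> (nat \<Rightarrow> 'a) set)
    \<Rightarrow> nat \<Rightarrow> (nat \<Rightarrow> 'a) list pmf" where
  "gprs_run n m p vbl A 0 = map_pmf (\<lambda>\<sigma>. [\<sigma>]) (mu n p)"
| "gprs_run n m p vbl A (Suc k) =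
     bind_pmf (gprs_run n m p vbl A k)
       (\<lambda>xs. map_pmf (\<lambda>\<sigma>. xs @ [\<sigma>]) (gprs_step n m p vbl A (last xs)))"

definition log_event :: "nat \<Rightarrow> nat \<Rightarrow> (nat \<Rightarrow> 'a pmf) \<Rightarrow> (nat \<Rightarrow> nat set) \<Rightarrow> (nat \<Rightarrow> (nat \<Rightarrow> 'a) set)
    \<Rightarrow> nat \<Rightarrow> (nat \<Rightarrow> nat set) \<Rightarrow> (nat \<Rightarrow> 'a) list set" where
  "log_event n m p vbl A l S =
     {xs. \<forall>t \<in> {1..l}. Bad m A (xs ! (t - 1)) \<noteq> {} \<and> Res n m p vbl A (xs ! (t - 1)) = S t}"

end

theory Submission
  imports Defs
begin

(* By induction on the number of rounds, sigma_(t+1) given the log is mu conditioned on avoiding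
   the events outside Gamma+(S_t). For the step, on the support of mu the condition
   "avoid the events in I, Res sigma = S" factors as C \<inter> F, where C depends only on the variables
   vbl(S) and F (avoid every event outside Gamma+(S)) only on the other variables: the boundary
   events of S are rejected by Res and so cannot occur, hence Res sigma = S can be read off the
   restriction of sigma to vbl(S). As mu is a product measure, resampling vbl(S) from mu
   conditioned on C \<inter> F yields mu conditioned on F. *)

lemma measure_cond_pmf:
  assumes "set_pmf p \<inter> s \<noteq> {}"
  shows "measure (measure_pmf (cond_pmf p s)) B = measure p (s \<inter> B) / measure p s"
proof -
  have ne: "emeasure (measure_pmf p) s \<noteq> 0"
    using assms by (simp add: emeasure_measure_pmf_not_zero)
  show ?thesis
    unfolding cond_pmf.rep_eq[OF assms]
    by (rule measure_uniform_measure[OF ne]) (simp_all add: measure_pmf.emeasure_finite)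
qed

lemma cond_pmf_cong:
  assumes "set_pmf p \<inter> s = set_pmf p \<inter> t" "set_pmf p \<inter> s \<noteq> {}"
  shows "cond_pmf p s = cond_pmf p t"
proof (rule pmf_eqI)
  fix x
  have t: "set_pmf p \<inter> t \<noteq> {}"
    using assms by simp
  have m: "measure p s = measure p t"
    using measure_Int_set_pmf[of p s] measure_Int_set_pmf[of p t] assms(1) by (simp add: Int_commute)
  show "pmf (cond_pmf p s) x = pmf (cond_pmf p t) x"
    unfolding pmf_cond[OF assms(2)] pmf_cond[OF t] m
    using assms(1) by (auto simp: set_pmf_eq)
qed

lemma cond_cond_pmf:
  assumes "set_pmf p \<inter> A \<inter> B \<noteq> {}"
  shows "cond_pmf (cond_pmf p A) B = cond_pmf p (A \<inter> B)"
proof (rule pmf_eqI)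
  fix x
  have a: "set_pmf p \<inter> A \<noteq> {}"
    using assms by blast
  have ab: "set_pmf (cond_pmf p A) \<inter> B \<noteq> {}"
    using assms by (simp add: set_cond_pmf[OF a])
  have ab': "set_pmf p \<inter> (A \<inter> B) \<noteq> {}"
    using assms by (simp add: Int_assoc)
  have pos: "measure p A > 0"
    using a by (auto intro: measure_pmf_posI)
  show "pmf (cond_pmf (cond_pmf p A) B) x = pmf (cond_pmf p (A \<inter> B)) x"
    unfolding pmf_cond[OF ab] pmf_cond[OF ab'] pmf_cond[OF a] measure_cond_pmf[OF a]
    using pos by auto
qed

lemma cond_pmf_UNIV: "cond_pmf p UNIV = p"
proof (rule pmf_eqI)
  fix i
  have ne: "set_pmf p \<inter> UNIV \<noteq> {}"
    using set_pmf_not_empty[of p] by simp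
  show "pmf (cond_pmf p UNIV) i = pmf p i"
    unfolding pmf_cond[OF ne] by simp
qed

lemma cond_pair_pmf:
  assumes "set_pmf P \<inter> C \<noteq> {}" "set_pmf Q \<inter> F \<noteq> {}"
  shows "cond_pmf (pair_pmf P Q) (C \<times> F) = pair_pmf (cond_pmf P C) (cond_pmf Q F)"
proof (rule pmf_eqI)
  fix z :: "'a \<times> 'b"
  obtain a b where z: "z = (a, b)"
    by (cases z)
  have cf: "set_pmf (pair_pmf P Q) \<inter> (C \<times> F) \<noteq> {}"
    using assms by auto
  have "measure (pair_pmf P Q) (C \<times> F) = measure (pair_pmf P Q) ((C \<inter> set_pmf P) \<times> (F \<inter> set_pmf Q))"
    using measure_Int_set_pmf[of "pair_pmf P Q" "C \<times> F"]
      measure_Int_set_pmf[of "pair_pmf P Q" "(C \<inter> set_pmf P) \<times> (F \<inter> set_pmf Q)"]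
    by (simp add: Times_Int_Times Int_ac)
  also have "\<dots> = measure P (C \<inter> set_pmf P) * measure Q (F \<inter> set_pmf Q)"
    by (rule measure_pmf_prob_product) (auto intro: countable_subset[OF _ countable_set_pmf])
  also have "\<dots> = measure P C * measure Q F" by (simp add: measure_Int_set_pmf)
  finally have m: "measure (pair_pmf P Q) (C \<times> F) = measure P C * measure Q F" .
  show "pmf (cond_pmf (pair_pmf P Q) (C \<times> F)) z = pmf (pair_pmf (cond_pmf P C) (cond_pmf Q F)) z"
    unfolding z pmf_cond[OF cf] pmf_pair pmf_cond[OF assms(1)] pmf_cond[OF assms(2)] m
    by auto
qed

lemma measure_bind_pmf_determined:
  assumes "\<And>x y. x \<in> set_pmf M \<Longrightarrow> y \<in> set_pmf (F x) \<Longrightarrow> y \<in> B \<longleftrightarrow> x \<in> B'"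
  shows "measure (bind_pmf M F) B = measure M B'"
proof -
  have "measure (bind_pmf M F) B = (\<integral>x. measure (F x) B \<partial>M)"
    by (simp add: measure_pmf_bind measure_pmf.measure_bind[where N="count_space UNIV"]
        measure_pmf_in_subprob_algebra)
  also have "\<dots> = (\<integral>x. indicator B' x \<partial>M)"
  proof (rule integral_cong_AE)
    show "AE x in M. measure (F x) B = indicator B' x"
      unfolding AE_measure_pmf_iff
    proof
      fix x assume x: "x \<in> set_pmf M"
      have "measure (F x) B = measure (F x) (if x \<in> B' then set_pmf (F x) else {})"
        using assms[OF x] by (intro measure_eq_AE) (auto simp: AE_measure_pmf_iff)
      then show "measure (F x) B = indicator B' x"
        by (simp add: measure_pmf.prob_eq_1 AE_measure_pmf_iff)
    qed
  qed simp_all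
  finally show ?thesis by simp
qed

lemma cond_bind_pmf:
  assumes determined: "\<And>x y. x \<in> set_pmf M \<Longrightarrow> y \<in> set_pmf (F x) \<Longrightarrow> y \<in> B \<longleftrightarrow> x \<in> B'"
    and ne: "set_pmf M \<inter> B' \<noteq> {}"
  shows "cond_pmf (bind_pmf M F) B = bind_pmf (cond_pmf M B') F"
proof (rule pmf_eqI)
  fix z
  obtain x where x: "x \<in> set_pmf M" "x \<in> B'"
    using ne by blast
  obtain y where y: "y \<in> set_pmf (F x)"
    using set_pmf_not_empty[of "F x"] by blast
  have ne': "set_pmf (bind_pmf M F) \<inter> B \<noteq> {}"
    using x y determined[OF x(1) y] by auto
  have pos: "measure M B' > 0"
    using x by (rule measure_pmf_posI)
  have restrict: "AE x in M. ennreal (pmf (F x) z) * indicator B' x = indicator B z * ennreal (pmf (F x) z)"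
    unfolding AE_measure_pmf_iff
    using determined by (auto simp: pmf_eq_0_set_pmf indicator_def)
  have "ennreal (pmf (bind_pmf (cond_pmf M B') F) z)
      = (\<integral>\<^sup>+x. ennreal (pmf (F x) z) * indicator B' x \<partial>M) / emeasure M B'"
    unfolding ennreal_pmf_bind cond_pmf.rep_eq[OF ne] by (simp add: nn_integral_uniform_measure)
  also have "\<dots> = indicator B z * ennreal (pmf (bind_pmf M F) z) / ennreal (measure M B')"
    using restrict
    by (simp add: nn_integral_cong_AE nn_integral_cmult ennreal_pmf_bind measure_pmf.emeasure_eq_measure)
  also have "\<dots> = ennreal (pmf (cond_pmf (bind_pmf M F) B) z)"
    using pos measure_bind_pmf_determined[OF determined]
    unfolding pmf_cond[OF ne'] by (simp add: divide_ennreal pmf_nonneg indicator_def)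
  finally show "pmf (cond_pmf (bind_pmf M F) B) z = pmf (bind_pmf (cond_pmf M B') F) z"
    by (simp add: pmf_nonneg)
qed

lemma last_cond_bind_snoc:
  fixes M :: "'a list pmf"
  assumes log: "\<And>xs \<sigma>. xs \<in> set_pmf M \<Longrightarrow> xs @ [\<sigma>] \<in> B \<longleftrightarrow> xs \<in> L \<and> last xs \<in> P"
    and ne: "set_pmf M \<inter> L \<inter> last -` P \<noteq> {}"
  shows "map_pmf last (cond_pmf (bind_pmf M (\<lambda>xs. map_pmf (\<lambda>\<sigma>. xs @ [\<sigma>]) (K (last xs)))) B)
       = bind_pmf (cond_pmf (map_pmf last (cond_pmf M L)) P) K"
proof -
  have "cond_pmf (bind_pmf M (\<lambda>xs. map_pmf (\<lambda>\<sigma>. xs @ [\<sigma>]) (K (last xs)))) B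
      = bind_pmf (cond_pmf M (L \<inter> last -` P)) (\<lambda>xs. map_pmf (\<lambda>\<sigma>. xs @ [\<sigma>]) (K (last xs)))"
    using log ne by (intro cond_bind_pmf) (auto simp: Int_assoc)
  also have "cond_pmf M (L \<inter> last -` P) = cond_pmf (cond_pmf M L) (last -` P)"
    using ne by (simp add: cond_cond_pmf Int_assoc)
  finally have "map_pmf last (cond_pmf (bind_pmf M (\<lambda>xs. map_pmf (\<lambda>\<sigma>. xs @ [\<sigma>]) (K (last xs)))) B)
      = bind_pmf (map_pmf last (cond_pmf (cond_pmf M L) (last -` P))) K"
    by (simp add: map_bind_pmf map_pmf_comp bind_map_pmf)
  also have "map_pmf last (cond_pmf (cond_pmf M L) (last -` P)) = cond_pmf (map_pmf last (cond_pmf M L)) P"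
  proof -
    have "set_pmf M \<inter> L \<noteq> {}"
      using ne by blast
    with ne show ?thesis
      by (subst cond_map_pmf) (auto simp: set_cond_pmf)
  qed
  finally show ?thesis .
qed

lemma mu_split:
  assumes "V \<subseteq> {..<n}"
  shows "mu n p = map_pmf (\<lambda>(f, g) x. if x \<in> V then f x else g x)
                    (pair_pmf (Pi_pmf V undefined p) (Pi_pmf ({..<n} - V) undefined p))"
proof -
  have "mu n p = Pi_pmf (V \<union> ({..<n} - V)) undefined p"
    using assms unfolding mu_def by (simp add: Un_absorb1)
  also have "\<dots> = map_pmf (\<lambda>(f, g) x. if x \<in> V then f x else g x)
                    (pair_pmf (Pi_pmf V undefined p) (Pi_pmf ({..<n} - V) undefined p))"
    using assms by (intro Pi_pmf_union) (auto intro: finite_subset)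
  finally show ?thesis .
qed

lemma cond_mu_split:
  assumes V: "V \<subseteq> {..<n}"
    and C_local: "\<And>\<sigma> \<sigma>'. \<forall>j\<in>V. \<sigma> j = \<sigma>' j \<Longrightarrow> \<sigma> \<in> C \<longleftrightarrow> \<sigma>' \<in> C"
    and F_local: "\<And>\<sigma> \<sigma>'. \<forall>j. j \<notin> V \<longrightarrow> \<sigma> j = \<sigma>' j \<Longrightarrow> \<sigma> \<in> F \<longleftrightarrow> \<sigma>' \<in> F"
    and ne: "set_pmf (mu n p) \<inter> (C \<inter> F) \<noteq> {}"
  shows "cond_pmf (mu n p) (C \<inter> F) = map_pmf (\<lambda>(f, g) x. if x \<in> V then f x else g x)
           (pair_pmf (cond_pmf (Pi_pmf V undefined p) C) (cond_pmf (Pi_pmf ({..<n} - V) undefined p) F))"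
proof -
  let ?merge = "\<lambda>(f, g) x. if x \<in> V then f x else g x"
  let ?P = "Pi_pmf V undefined p" and ?Q = "Pi_pmf ({..<n} - V) undefined p"
  have preimage: "?merge -` (C \<inter> F) = C \<times> F"
  proof (intro set_eqI, clarify)
    fix f g
    have "?merge (f, g) \<in> C \<longleftrightarrow> f \<in> C"
      by (rule C_local) simp
    moreover have "?merge (f, g) \<in> F \<longleftrightarrow> g \<in> F"
      by (rule F_local) simp
    ultimately show "(f, g) \<in> ?merge -` (C \<inter> F) \<longleftrightarrow> (f, g) \<in> C \<times> F"
      by auto
  qed
  obtain f g where fg: "f \<in> set_pmf ?P" "g \<in> set_pmf ?Q" "(f, g) \<in> C \<times> F"
    using ne unfolding mu_split[OF V] preimage[symmetric] by auto
  then have ne': "set_pmf (pair_pmf ?P ?Q) \<inter> ?merge -` (C \<inter> F) \<noteq> {}"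
    unfolding preimage by auto
  from fg have "set_pmf ?P \<inter> C \<noteq> {}" "set_pmf ?Q \<inter> F \<noteq> {}"
    by auto
  with ne' show ?thesis
    unfolding mu_split[OF V] cond_map_pmf[OF ne'] preimage by (simp add: cond_pair_pmf)
qed

lemma resample_cond_mu:
  assumes V: "V \<subseteq> {..<n}"
    and C_local: "\<And>\<sigma> \<sigma>'. \<forall>j\<in>V. \<sigma> j = \<sigma>' j \<Longrightarrow> \<sigma> \<in> C \<longleftrightarrow> \<sigma>' \<in> C"
    and F_local: "\<And>\<sigma> \<sigma>'. \<forall>j. j \<notin> V \<longrightarrow> \<sigma> j = \<sigma>' j \<Longrightarrow> \<sigma> \<in> F \<longleftrightarrow> \<sigma>' \<in> F"
    and ne: "set_pmf (mu n p) \<inter> (C \<inter> F) \<noteq> {}"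
  shows "bind_pmf (cond_pmf (mu n p) (C \<inter> F)) (\<lambda>\<sigma>. map_pmf (\<lambda>\<tau> j. if j \<in> V then \<tau> j else \<sigma> j) (mu n p))
       = cond_pmf (mu n p) F"
proof -
  let ?merge = "\<lambda>(f, g) x. if x \<in> V then f x else g x"
  let ?P = "Pi_pmf V undefined p" and ?Q = "Pi_pmf ({..<n} - V) undefined p"
  have cond_CF: "cond_pmf (mu n p) (C \<inter> F) = map_pmf ?merge (pair_pmf (cond_pmf ?P C) (cond_pmf ?Q F))"
    using V C_local F_local ne by (rule cond_mu_split)
  have cond_F: "cond_pmf (mu n p) F = map_pmf ?merge (pair_pmf ?P (cond_pmf ?Q F))"
  proof -
    have "set_pmf (mu n p) \<inter> (UNIV \<inter> F) \<noteq> {}"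
      using ne by blast
    from cond_mu_split[OF V _ F_local this] show ?thesis
      by (simp add: cond_pmf_UNIV)
  qed
  have resample: "map_pmf (\<lambda>\<tau> j. if j \<in> V then \<tau> j else ?merge fg j) (mu n p)
      = map_pmf (\<lambda>f. ?merge (f, snd fg)) ?P" for fg :: "(nat \<Rightarrow> 'a) \<times> (nat \<Rightarrow> 'a)"
  proof -
    have "map_pmf (\<lambda>\<tau> j. if j \<in> V then \<tau> j else ?merge fg j) (mu n p)
        = map_pmf (\<lambda>f. ?merge (f, snd fg)) (map_pmf fst (pair_pmf ?P ?Q))"
      unfolding mu_split[OF V] map_pmf_comp
      by (intro map_pmf_cong refl) (auto simp: fun_eq_iff split: prod.splits)
    then show ?thesis
      by (simp add: map_fst_pair_pmf)
  qed
  have "bind_pmf (cond_pmf (mu n p) (C \<inter> F)) (\<lambda>\<sigma>. map_pmf (\<lambda>\<tau> j. if j \<in> V then \<tau> j else \<sigma> j) (mu n p))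
      = bind_pmf (pair_pmf (cond_pmf ?P C) (cond_pmf ?Q F)) (\<lambda>fg. map_pmf (\<lambda>f. ?merge (f, snd fg)) ?P)"
    by (simp only: cond_CF bind_map_pmf resample)
  also have "\<dots> = bind_pmf (cond_pmf ?Q F) (\<lambda>g. map_pmf (\<lambda>f. ?merge (f, g)) ?P)"
    using bind_map_pmf[of snd "pair_pmf (cond_pmf ?P C) (cond_pmf ?Q F)" "\<lambda>g. map_pmf (\<lambda>f. ?merge (f, g)) ?P"]
    by (simp add: map_snd_pair_pmf)
  also have "\<dots> = map_pmf ?merge (pair_pmf ?P (cond_pmf ?Q F))"
    unfolding pair_pmf_def map_bind_pmf map_pmf_def
    by (subst bind_commute_pmf) (simp add: bind_return_pmf bind_assoc_pmf)
  finally show ?thesis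
    unfolding cond_F .
qed

lemma bdry_subset: "bdry m vbl R \<subseteq> {..<m}"
  by (auto simp: bdry_def)

lemma finite_bdry: "finite (bdry m vbl R)"
  using bdry_subset by (rule finite_subset) simp

lemma bdry_disjoint: "bdry m vbl R \<inter> R = {}"
  by (auto simp: bdry_def)

lemma vbl_inter_vbls_bdry: "i \<in> bdry m vbl R \<Longrightarrow> vbl i \<inter> vbls vbl R \<noteq> {}"
  by (auto simp: bdry_def adj_def vbls_def)

lemma vbls_mono: "R \<subseteq> R' \<Longrightarrow> vbls vbl R \<subseteq> vbls vbl R'"
  by (auto simp: vbls_def)

lemma compat_cong:
  "\<forall>j\<in>vbl i \<inter> vbls vbl R. \<sigma> j = \<rho> j \<Longrightarrow> compat n p vbl A i \<sigma> R = compat n p vbl A i \<rho> R"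
  unfolding compat_def by auto

definition rejections_certified ::
    "nat \<Rightarrow> (nat \<Rightarrow> 'a pmf) \<Rightarrow> (nat \<Rightarrow> nat set) \<Rightarrow> (nat \<Rightarrow> (nat \<Rightarrow> 'a) set)
      \<Rightarrow> (nat \<Rightarrow> 'a) \<Rightarrow> nat set \<times> nat set \<Rightarrow> bool" where
  "rejections_certified n p vbl A \<sigma> RN \<longleftrightarrow>
     (\<forall>i\<in>snd RN. \<exists>R'\<subseteq>fst RN. vbl i \<inter> vbls vbl R' \<noteq> {} \<and> \<not> compat n p vbl A i \<sigma> R')"

lemma fold_res_inner_Un:
  "fst (fold (res_inner n p vbl A \<sigma>) L s) \<union> snd (fold (res_inner n p vbl A \<sigma>) L s)
     = fst s \<union> snd s \<union> set L"
  by (induction L arbitrary: s) (auto simp: res_inner_def)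

lemma fold_res_inner_mono:
  "fst s \<subseteq> fst (fold (res_inner n p vbl A \<sigma>) L s)"
proof (induction L arbitrary: s)
  case (Cons i L)
  from Cons[of "res_inner n p vbl A \<sigma> i s"] show ?case
    by (auto simp: res_inner_def split: if_splits)
qed simp

lemma fold_res_inner_local:
  assumes "\<And>R i. R \<subseteq> X \<Longrightarrow> compat n p vbl A i \<sigma> R = compat n p vbl A i \<rho> R"
    and "fst (fold (res_inner n p vbl A \<rho>) L s) \<subseteq> X"
  shows "fold (res_inner n p vbl A \<sigma>) L s = fold (res_inner n p vbl A \<rho>) L s"
  using assms(2)
proof (induction L arbitrary: s)
  case (Cons i L)
  have "fst s \<subseteq> fst (res_inner n p vbl A \<rho> i s)"
    by (auto simp: res_inner_def)
  also have "\<dots> \<subseteq> fst (fold (res_inner n p vbl A \<rho>) L (res_inner n p vbl A \<rho> i s))"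
    by (rule fold_res_inner_mono)
  finally have "fst s \<subseteq> X"
    using Cons.prems by simp
  then have "res_inner n p vbl A \<sigma> i s = res_inner n p vbl A \<rho> i s"
    using assms(1) by (simp add: res_inner_def)
  with Cons show ?case
    by simp
qed simp

lemma res_inner_certified:
  assumes "vbl i \<inter> vbls vbl (fst s) \<noteq> {}" and "rejections_certified n p vbl A \<sigma> s"
  shows "rejections_certified n p vbl A \<sigma> (res_inner n p vbl A \<sigma> i s)"
proof (cases "compat n p vbl A i \<sigma> (fst s)")
  case True
  with assms(2) show ?thesis
    unfolding rejections_certified_def res_inner_def by (simp; meson subset_insertI2)
next
  case False
  with assms show ?thesis
    unfolding rejections_certified_def res_inner_def by auto
qed

lemma fold_res_inner_certified:
  assumes "\<forall>i\<in>set L. vbl i \<inter> vbls vbl (fst s) \<noteq> {}" and "rejections_certified n p vbl A \<sigma> s"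
  shows "rejections_certified n p vbl A \<sigma> (fold (res_inner n p vbl A \<sigma>) L s)"
  using assms
proof (induction L arbitrary: s)
  case (Cons i L)
  have "vbls vbl (fst s) \<subseteq> vbls vbl (fst (res_inner n p vbl A \<sigma> i s))"
    by (rule vbls_mono) (auto simp: res_inner_def)
  then have "\<forall>j\<in>set L. vbl j \<inter> vbls vbl (fst (res_inner n p vbl A \<sigma> i s)) \<noteq> {}"
    using Cons.prems(1) by auto
  moreover have "rejections_certified n p vbl A \<sigma> (res_inner n p vbl A \<sigma> i s)"
    using Cons.prems by (intro res_inner_certified) auto
  ultimately show ?case
    using Cons.IH by simp
qed simp

context
  fixes n m :: nat and p :: "nat \<Rightarrow> 'a pmf" and vbl :: "nat \<Rightarrow> nat set"
    and A :: "nat \<Rightarrow> (nat \<Rightarrow> 'a) set"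
begin

abbreviation res_cond :: "nat set \<times> nat set \<Rightarrow> bool" where
  "res_cond RN \<equiv> bdry m vbl (fst RN) - snd RN \<noteq> {}"

abbreviation res_loop :: "(nat \<Rightarrow> 'a) \<Rightarrow> nat set \<times> nat set \<Rightarrow> nat set \<times> nat set" where
  "res_loop \<sigma> \<equiv> while res_cond (res_step n m p vbl A \<sigma>)"

lemma res_step_Un:
  "fst (res_step n m p vbl A \<sigma> s) \<union> snd (res_step n m p vbl A \<sigma> s)
     = fst s \<union> snd s \<union> (bdry m vbl (fst s) - snd s)"
  unfolding res_step_def fold_res_inner_Un by (simp add: finite_bdry)

lemma res_step_mono: "fst s \<subseteq> fst (res_step n m p vbl A \<sigma> s)"
  unfolding res_step_def by (rule fold_res_inner_mono)

lemma res_step_local: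
  assumes "\<And>R i. R \<subseteq> X \<Longrightarrow> compat n p vbl A i \<sigma> R = compat n p vbl A i \<rho> R"
    and "fst (res_step n m p vbl A \<rho> s) \<subseteq> X"
  shows "res_step n m p vbl A \<sigma> s = res_step n m p vbl A \<rho> s"
  using assms unfolding res_step_def by (rule fold_res_inner_local)

lemma res_step_grows:
  assumes "fst s \<union> snd s \<subseteq> {..<m}" "res_cond s"
  shows "fst (res_step n m p vbl A \<sigma> s) \<union> snd (res_step n m p vbl A \<sigma> s) \<subseteq> {..<m}"
    and "card (fst s \<union> snd s) < card (fst (res_step n m p vbl A \<sigma> s) \<union> snd (res_step n m p vbl A \<sigma> s))"
proof -
  show bounded: "fst (res_step n m p vbl A \<sigma> s) \<union> snd (res_step n m p vbl A \<sigma> s) \<subseteq> {..<m}"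
    using assms(1) bdry_subset unfolding res_step_Un by blast
  have "fst s \<union> snd s \<subset> fst (res_step n m p vbl A \<sigma> s) \<union> snd (res_step n m p vbl A \<sigma> s)"
    using assms(2) bdry_disjoint[of m vbl "fst s"] unfolding res_step_Un by blast
  then show "card (fst s \<union> snd s) < card (fst (res_step n m p vbl A \<sigma> s) \<union> snd (res_step n m p vbl A \<sigma> s))"
    using bounded by (meson finite_lessThan finite_subset psubset_card_mono)
qed

lemma res_loop_rule:
  assumes "fst s \<union> snd s \<subseteq> {..<m}" "I s"
    and "\<And>s. fst s \<union> snd s \<subseteq> {..<m} \<Longrightarrow> res_cond s \<Longrightarrow> I s \<Longrightarrow> I (res_step n m p vbl A \<sigma> s)"
  shows "I (res_loop \<sigma> s) \<and> \<not> res_cond (res_loop \<sigma> s)"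
proof (rule while_rule[where P = "\<lambda>s. fst s \<union> snd s \<subseteq> {..<m} \<and> I s"
      and r = "Wellfounded.measure (\<lambda>s. m - card (fst s \<union> snd s))"])
  fix s
  assume s: "fst s \<union> snd s \<subseteq> {..<m} \<and> I s" and "res_cond s"
  with res_step_grows[of s \<sigma>] assms(3)
  show "fst (res_step n m p vbl A \<sigma> s) \<union> snd (res_step n m p vbl A \<sigma> s) \<subseteq> {..<m}
      \<and> I (res_step n m p vbl A \<sigma> s)"
    by blast
  have "card (fst (res_step n m p vbl A \<sigma> s) \<union> snd (res_step n m p vbl A \<sigma> s)) \<le> m"
    using res_step_grows(1)[of s \<sigma>] s \<open>res_cond s\<close> by (metis card_lessThan card_mono finite_lessThan)
  with res_step_grows(2)[of s \<sigma>] s \<open>res_cond s\<close>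
  show "(res_step n m p vbl A \<sigma> s, s) \<in> Wellfounded.measure (\<lambda>s. m - card (fst s \<union> snd s))"
    by simp
qed (use assms in auto)

lemma res_loop_mono:
  assumes "fst s \<union> snd s \<subseteq> {..<m}"
  shows "fst s \<subseteq> fst (res_loop \<sigma> s)"
proof -
  have "fst s \<subseteq> fst (res_loop \<sigma> s) \<and> \<not> res_cond (res_loop \<sigma> s)"
    using assms by (rule res_loop_rule) (use res_step_mono in blast)+
  then show ?thesis ..
qed

lemma res_loop_Res:
  fixes \<sigma> :: "nat \<Rightarrow> 'a"
  defines "W \<equiv> res_loop \<sigma> (Bad m A \<sigma>, {})"
  shows "Bad m A \<sigma> \<subseteq> fst W" "fst W \<subseteq> {..<m}" "bdry m vbl (fst W) \<subseteq> snd W"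
    and "rejections_certified n p vbl A \<sigma> W"
proof -
  let ?I = "\<lambda>s. Bad m A \<sigma> \<subseteq> fst s \<and> fst s \<subseteq> {..<m} \<and> rejections_certified n p vbl A \<sigma> s"
  have step: "?I (res_step n m p vbl A \<sigma> s)"
    if "fst s \<union> snd s \<subseteq> {..<m}" "res_cond s" "?I s" for s
  proof -
    have "rejections_certified n p vbl A \<sigma> (res_step n m p vbl A \<sigma> s)"
      unfolding res_step_def using that(3) vbl_inter_vbls_bdry
      by (intro fold_res_inner_certified) (auto simp: finite_bdry)
    then show ?thesis
      using that res_step_grows(1)[OF that(1,2)] res_step_mono[of s \<sigma>] by blast
  qed
  have "?I W \<and> \<not> res_cond W"
    unfolding W_def
  proof (rule res_loop_rule)
    show "fst (Bad m A \<sigma>, {}) \<union> snd (Bad m A \<sigma>, {}) \<subseteq> {..<m}"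
      by (auto simp: Bad_def)
    show "?I (Bad m A \<sigma>, {})"
      by (auto simp: Bad_def rejections_certified_def)
  qed (fact step)
  then show "Bad m A \<sigma> \<subseteq> fst W" "fst W \<subseteq> {..<m}" "bdry m vbl (fst W) \<subseteq> snd W"
      "rejections_certified n p vbl A \<sigma> W"
    by auto
qed

lemma Bad_subset_Res: "Bad m A \<sigma> \<subseteq> Res n m p vbl A \<sigma>"
  unfolding Res_def by (rule res_loop_Res)

lemma Res_subset: "Res n m p vbl A \<sigma> \<subseteq> {..<m}"
  unfolding Res_def by (rule res_loop_Res)

lemma bdry_Res_avoided:
  assumes "i \<in> bdry m vbl (Res n m p vbl A \<rho>)"
    and "\<forall>j<n. \<sigma> j \<in> set_pmf (p j)" and "\<forall>j\<in>vbls vbl (Res n m p vbl A \<rho>). \<sigma> j = \<rho> j"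
  shows "\<sigma> \<notin> A i"
proof -
  let ?W = "res_loop \<rho> (Bad m A \<rho>, {})"
  have "i \<in> snd ?W"
    using res_loop_Res(3) assms(1) unfolding Res_def by blast
  then obtain R where R: "R \<subseteq> fst ?W" "vbl i \<inter> vbls vbl R \<noteq> {}" "\<not> compat n p vbl A i \<rho> R"
    using res_loop_Res(4) unfolding rejections_certified_def by blast
  have "vbls vbl R \<subseteq> vbls vbl (Res n m p vbl A \<rho>)"
    using R(1) vbls_mono unfolding Res_def by blast
  then show ?thesis
    using R assms(2,3) unfolding compat_def by blast
qed

lemma Res_local:
  assumes "Bad m A \<sigma> = Bad m A \<rho>" and "\<forall>j\<in>vbls vbl (Res n m p vbl A \<rho>). \<sigma> j = \<rho> j"
  shows "Res n m p vbl A \<sigma> = Res n m p vbl A \<rho>"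
proof -
  let ?s0 = "(Bad m A \<rho>, {}) :: nat set \<times> nat set" and ?W = "res_loop \<rho> (Bad m A \<rho>, {})"
  have compat_eq: "compat n p vbl A i \<sigma> R = compat n p vbl A i \<rho> R" if "R \<subseteq> fst ?W" for R i
  proof -
    have "vbls vbl R \<subseteq> vbls vbl (Res n m p vbl A \<rho>)"
      using that vbls_mono unfolding Res_def by blast
    then show ?thesis
      using assms(2) by (intro compat_cong) blast
  qed
  have bounded: "fst ?s0 \<union> snd ?s0 \<subseteq> {..<m}"
    by (auto simp: Bad_def)
  \<comment> \<open>Along the loop for \<open>\<rho>\<close>, the loop for \<open>\<sigma>\<close> takes the same steps, since \<open>R\<close> stays
    inside \<open>Res \<rho>\<close>, on whose variables \<open>\<sigma>\<close> and \<open>\<rho>\<close> agree.\<close>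
  have "(res_loop \<rho> ?W = ?W \<and> res_loop \<sigma> ?W = res_loop \<sigma> ?s0) \<and> \<not> res_cond ?W"
  proof (rule res_loop_rule[where I = "\<lambda>s. res_loop \<rho> s = ?W \<and> res_loop \<sigma> s = res_loop \<sigma> ?s0",
        OF bounded])
    fix s
    assume s: "fst s \<union> snd s \<subseteq> {..<m}" "res_cond s"
      and I: "res_loop \<rho> s = ?W \<and> res_loop \<sigma> s = res_loop \<sigma> ?s0"
    have unfold: "res_loop \<tau> s = res_loop \<tau> (res_step n m p vbl A \<tau> s)" for \<tau>
      by (subst while_unfold) (rule if_P[OF s(2)])
    have loop_\<rho>: "res_loop \<rho> (res_step n m p vbl A \<rho> s) = ?W"
      using I unfold[of \<rho>] by simp
    have sub: "fst (res_step n m p vbl A \<rho> s) \<subseteq> fst ?W"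
      using res_loop_mono[OF res_step_grows(1)[OF s, where \<sigma> = \<rho>], where \<sigma> = \<rho>] unfolding loop_\<rho> .
    have "res_step n m p vbl A \<sigma> s = res_step n m p vbl A \<rho> s"
      using compat_eq sub by (rule res_step_local)
    then show "res_loop \<rho> (res_step n m p vbl A \<rho> s) = ?W \<and>
        res_loop \<sigma> (res_step n m p vbl A \<rho> s) = res_loop \<sigma> ?s0"
      using I unfold[of \<sigma>] loop_\<rho> by simp
  qed simp
  moreover have "res_loop \<sigma> ?W = ?W" if "\<not> res_cond ?W"
    by (subst while_unfold) (rule if_not_P[OF that])
  ultimately have "res_loop \<sigma> ?s0 = ?W"
    by simp
  then show ?thesis
    unfolding Res_def assms(1) by simp
qed

end

definition avoiding :: "(nat \<Rightarrow> (nat \<Rightarrow> 'a) set) \<Rightarrow> nat set \<Rightarrow> (nat \<Rightarrow> 'a) set" where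
  "avoiding A I = {\<sigma>. \<forall>i\<in>I. \<sigma> \<notin> A i}"

definition resamples ::
    "nat \<Rightarrow> nat \<Rightarrow> (nat \<Rightarrow> 'a pmf) \<Rightarrow> (nat \<Rightarrow> nat set) \<Rightarrow> (nat \<Rightarrow> (nat \<Rightarrow> 'a) set)
      \<Rightarrow> nat set \<Rightarrow> (nat \<Rightarrow> 'a) set" where
  "resamples n m p vbl A S = {\<sigma>. Bad m A \<sigma> \<noteq> {} \<and> Res n m p vbl A \<sigma> = S}"

lemma set_pmf_mu: "\<sigma> \<in> set_pmf (mu n p) \<Longrightarrow> \<forall>j<n. \<sigma> j \<in> set_pmf (p j)"
  unfolding mu_def by (subst (asm) set_Pi_pmf) (auto simp: PiE_dflt_def)

lemma vbls_disjoint_outside_Gamma_plus: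
  "i < m \<Longrightarrow> i \<notin> Gamma_plus m vbl S \<Longrightarrow> vbl i \<inter> vbls vbl S = {}"
  unfolding Gamma_plus_def bdry_def adj_def vbls_def by auto

lemma resamples_subset_avoiding:
  "resamples n m p vbl A S \<subseteq> avoiding A ({..<m} - Gamma_plus m vbl S)"
  using Bad_subset_Res unfolding resamples_def avoiding_def Gamma_plus_def Bad_def by fastforce

lemma length_gprs_run: "xs \<in> set_pmf (gprs_run n m p vbl A k) \<Longrightarrow> length xs = Suc k"
  by (induction k arbitrary: xs) auto

lemma log_event_0: "log_event n m p vbl A 0 S = UNIV"
  by (simp add: log_event_def)

lemma log_event_snoc:
  assumes "length xs = Suc k"
  shows "xs @ [\<sigma>] \<in> log_event n m p vbl A (Suc k) S \<longleftrightarrow>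
         xs \<in> log_event n m p vbl A k S \<and> last xs \<in> resamples n m p vbl A (S (Suc k))"
proof -
  have nth: "(xs @ [\<sigma>]) ! (t - 1) = xs ! (t - 1)" if "t \<in> {1..Suc k}" for t
    using that assms by (auto simp: nth_append)
  have last: "xs ! (Suc k - 1) = last xs"
    using assms by (subst last_conv_nth) auto
  have "xs @ [\<sigma>] \<in> log_event n m p vbl A (Suc k) S \<longleftrightarrow>
     (\<forall>t\<in>{1..Suc k}. Bad m A (xs ! (t - 1)) \<noteq> {} \<and> Res n m p vbl A (xs ! (t - 1)) = S t)"
    unfolding log_event_def using nth by simp
  also have "\<dots> \<longleftrightarrow> (\<forall>t\<in>{1..k}. Bad m A (xs ! (t - 1)) \<noteq> {} \<and> Res n m p vbl A (xs ! (t - 1)) = S t)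
      \<and> Bad m A (xs ! (Suc k - 1)) \<noteq> {} \<and> Res n m p vbl A (xs ! (Suc k - 1)) = S (Suc k)"
    by (auto simp: atLeastAtMostSuc_conv)
  finally show ?thesis
    unfolding last by (simp add: log_event_def resamples_def)
qed

context
  fixes n m :: nat and p :: "nat \<Rightarrow> 'a pmf" and vbl :: "nat \<Rightarrow> nat set"
    and A :: "nat \<Rightarrow> (nat \<Rightarrow> 'a) set"
  assumes vbl_sub: "\<forall>i<m. vbl i \<subseteq> {..<n}"
    and determined: "\<forall>i<m. \<forall>\<sigma> \<tau>. (\<forall>j\<in>vbl i. \<sigma> j = \<tau> j) \<longrightarrow> (\<sigma> \<in> A i \<longleftrightarrow> \<tau> \<in> A i)"
begin

lemma same_events_as_resampled:
  assumes \<rho>: "\<rho> \<in> set_pmf (mu n p)" "\<rho> \<in> resamples n m p vbl A S"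
    and \<sigma>: "\<sigma> \<in> set_pmf (mu n p)" "\<sigma> \<in> avoiding A ({..<m} - Gamma_plus m vbl S)"
    and agree: "\<forall>j\<in>vbls vbl S. \<sigma> j = \<rho> j"
    and i: "i < m"
  shows "\<sigma> \<in> A i \<longleftrightarrow> \<rho> \<in> A i"
proof -
  have Res_\<rho>: "Res n m p vbl A \<rho> = S"
    using \<rho>(2) by (simp add: resamples_def)
  consider "i \<in> S" | "i \<in> bdry m vbl S" | "i \<notin> Gamma_plus m vbl S"
    unfolding Gamma_plus_def by blast
  then show ?thesis
  proof cases
    case 1
    then have "\<forall>j\<in>vbl i. \<sigma> j = \<rho> j"
      using agree by (auto simp: vbls_def)
    with determined i show ?thesis
      by blast
  next
    case 2
    then have bdry: "i \<in> bdry m vbl (Res n m p vbl A \<rho>)"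
      by (simp add: Res_\<rho>)
    have "\<sigma> \<notin> A i"
      using bdry set_pmf_mu[OF \<sigma>(1)] agree[folded Res_\<rho>] by (rule bdry_Res_avoided)
    moreover have "\<rho> \<notin> A i"
      using bdry set_pmf_mu[OF \<rho>(1)] by (rule bdry_Res_avoided) simp
    ultimately show ?thesis
      by blast
  next
    case 3
    then show ?thesis
      using resamples_subset_avoiding[of n m p vbl A S] \<rho>(2) \<sigma>(2) i by (auto simp: avoiding_def)
  qed
qed

lemma resamples_factor:
  assumes I: "I \<subseteq> {..<m}"
  obtains C where "\<And>\<sigma> \<sigma>'. \<forall>j\<in>vbls vbl S. \<sigma> j = \<sigma>' j \<Longrightarrow> \<sigma> \<in> C \<longleftrightarrow> \<sigma>' \<in> C"
    and "set_pmf (mu n p) \<inter> (avoiding A I \<inter> resamples n m p vbl A S) =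
         set_pmf (mu n p) \<inter> (C \<inter> avoiding A ({..<m} - Gamma_plus m vbl S))"
proof -
  define C where "C = {\<sigma>. \<exists>\<rho> \<in> set_pmf (mu n p) \<inter> (avoiding A I \<inter> resamples n m p vbl A S).
                            \<forall>j\<in>vbls vbl S. \<sigma> j = \<rho> j}"
  have C_local: "\<sigma> \<in> C \<longleftrightarrow> \<sigma>' \<in> C" if "\<forall>j\<in>vbls vbl S. \<sigma> j = \<sigma>' j" for \<sigma> \<sigma>'
    using that unfolding C_def by auto
  have "set_pmf (mu n p) \<inter> (avoiding A I \<inter> resamples n m p vbl A S) =
        set_pmf (mu n p) \<inter> (C \<inter> avoiding A ({..<m} - Gamma_plus m vbl S))"
  proof (intro set_eqI iffI)
    fix \<sigma>
    assume "\<sigma> \<in> set_pmf (mu n p) \<inter> (avoiding A I \<inter> resamples n m p vbl A S)"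
    then show "\<sigma> \<in> set_pmf (mu n p) \<inter> (C \<inter> avoiding A ({..<m} - Gamma_plus m vbl S))"
      using resamples_subset_avoiding unfolding C_def by blast
  next
    fix \<sigma>
    assume \<sigma>: "\<sigma> \<in> set_pmf (mu n p) \<inter> (C \<inter> avoiding A ({..<m} - Gamma_plus m vbl S))"
    then obtain \<rho> where \<rho>: "\<rho> \<in> set_pmf (mu n p)" "\<rho> \<in> avoiding A I" "\<rho> \<in> resamples n m p vbl A S"
      and agree: "\<forall>j\<in>vbls vbl S. \<sigma> j = \<rho> j"
      unfolding C_def by blast
    have same: "\<sigma> \<in> A i \<longleftrightarrow> \<rho> \<in> A i" if "i < m" for i
      using same_events_as_resampled[OF \<rho>(1,3) _ _ agree that] \<sigma> by blast
    then have Bad: "Bad m A \<sigma> = Bad m A \<rho>"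
      by (auto simp: Bad_def)
    moreover have Res_\<rho>: "Res n m p vbl A \<rho> = S"
      using \<rho>(3) by (simp add: resamples_def)
    moreover have "Res n m p vbl A \<sigma> = Res n m p vbl A \<rho>"
      using Bad agree unfolding Res_\<rho>[symmetric] by (rule Res_local)
    ultimately have "\<sigma> \<in> resamples n m p vbl A S"
      using \<rho>(3) by (simp add: resamples_def)
    moreover have "\<sigma> \<in> avoiding A I"
      using \<rho>(2) same I by (auto simp: avoiding_def)
    ultimately show "\<sigma> \<in> set_pmf (mu n p) \<inter> (avoiding A I \<inter> resamples n m p vbl A S)"
      using \<sigma> by blast
  qed
  with C_local show thesis
    by (rule that)
qed

lemma round_cond_mu:
  assumes I: "I \<subseteq> {..<m}"
    and ne: "set_pmf (mu n p) \<inter> (avoiding A I \<inter> resamples n m p vbl A S) \<noteq> {}"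
  shows "bind_pmf (cond_pmf (mu n p) (avoiding A I \<inter> resamples n m p vbl A S)) (gprs_step n m p vbl A)
       = cond_pmf (mu n p) (avoiding A ({..<m} - Gamma_plus m vbl S))"
proof -
  define F where "F = avoiding A ({..<m} - Gamma_plus m vbl S)"
  obtain C where C_local: "\<And>\<sigma> \<sigma>'. \<forall>j\<in>vbls vbl S. \<sigma> j = \<sigma>' j \<Longrightarrow> \<sigma> \<in> C \<longleftrightarrow> \<sigma>' \<in> C"
    and factor: "set_pmf (mu n p) \<inter> (avoiding A I \<inter> resamples n m p vbl A S) = set_pmf (mu n p) \<inter> (C \<inter> F)"
    using resamples_factor[OF I] unfolding F_def by blast
  obtain \<rho> where "\<rho> \<in> resamples n m p vbl A S"
    using ne by blast
  then have "S \<subseteq> {..<m}"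
    using Res_subset[of n m p vbl A \<rho>] by (simp add: resamples_def)
  then have V: "vbls vbl S \<subseteq> {..<n}"
    using vbl_sub by (auto simp: vbls_def)
  have F_local: "\<sigma> \<in> F \<longleftrightarrow> \<sigma>' \<in> F" if "\<forall>j. j \<notin> vbls vbl S \<longrightarrow> \<sigma> j = \<sigma>' j" for \<sigma> \<sigma>'
  proof -
    have "\<sigma> \<in> A i \<longleftrightarrow> \<sigma>' \<in> A i" if "i < m" "i \<notin> Gamma_plus m vbl S" for i
      using determined vbls_disjoint_outside_Gamma_plus[OF that] \<open>\<forall>j. j \<notin> vbls vbl S \<longrightarrow> \<sigma> j = \<sigma>' j\<close> that(1)
      by blast
    then show ?thesis
      unfolding F_def avoiding_def by auto
  qed
  have "bind_pmf (cond_pmf (mu n p) (avoiding A I \<inter> resamples n m p vbl A S)) (gprs_step n m p vbl A)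
      = bind_pmf (cond_pmf (mu n p) (avoiding A I \<inter> resamples n m p vbl A S))
          (\<lambda>\<sigma>. map_pmf (\<lambda>\<tau> j. if j \<in> vbls vbl S then \<tau> j else \<sigma> j) (mu n p))"
    using ne by (intro bind_pmf_cong) (auto simp: gprs_step_def resamples_def)
  also have "\<dots> = bind_pmf (cond_pmf (mu n p) (C \<inter> F))
          (\<lambda>\<sigma>. map_pmf (\<lambda>\<tau> j. if j \<in> vbls vbl S then \<tau> j else \<sigma> j) (mu n p))"
    using cond_pmf_cong[OF factor ne] by simp
  also have "\<dots> = cond_pmf (mu n p) F"
    using V C_local F_local ne factor by (intro resample_cond_mu) auto
  finally show ?thesis
    unfolding F_def .
qed

lemma last_cond_gprs_run:
  assumes "set_pmf (gprs_run n m p vbl A k) \<inter> log_event n m p vbl A k S \<noteq> {}"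
  defines "E \<equiv> avoiding A (if k = 0 then {} else {..<m} - Gamma_plus m vbl (S k))"
  shows "set_pmf (mu n p) \<inter> E \<noteq> {} \<and>
    map_pmf last (cond_pmf (gprs_run n m p vbl A k) (log_event n m p vbl A k S)) = cond_pmf (mu n p) E"
  using assms(1) unfolding E_def
proof (induction k)
  case 0
  then show ?case
    by (simp add: log_event_0 avoiding_def cond_pmf_UNIV map_pmf_comp)
next
  case (Suc k)
  let ?R = "gprs_run n m p vbl A k" and ?L = "log_event n m p vbl A k S"
  let ?P = "resamples n m p vbl A (S (Suc k))"
  let ?E = "avoiding A (if k = 0 then {} else {..<m} - Gamma_plus m vbl (S k))"
  let ?F = "avoiding A ({..<m} - Gamma_plus m vbl (S (Suc k)))"
  have log: "xs @ [\<sigma>] \<in> log_event n m p vbl A (Suc k) S \<longleftrightarrow> xs \<in> ?L \<and> last xs \<in> ?P"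
    if "xs \<in> set_pmf ?R" for xs \<sigma>
    using that by (simp add: log_event_snoc length_gprs_run)
  obtain xs where xs: "xs \<in> set_pmf ?R" "xs \<in> ?L" "last xs \<in> ?P"
    using Suc.prems log by auto
  then have ne_L: "set_pmf ?R \<inter> ?L \<noteq> {}"
    by blast
  with Suc.IH have ne_E: "set_pmf (mu n p) \<inter> ?E \<noteq> {}"
    and IH: "map_pmf last (cond_pmf ?R ?L) = cond_pmf (mu n p) ?E"
    by auto
  have "last xs \<in> set_pmf (map_pmf last (cond_pmf ?R ?L))"
    using xs by (auto simp: set_cond_pmf[OF ne_L])
  then have last_xs: "last xs \<in> set_pmf (mu n p) \<inter> ?E \<inter> ?P"
    using xs(3) unfolding IH by (simp add: set_cond_pmf[OF ne_E])
  have "map_pmf last (cond_pmf (gprs_run n m p vbl A (Suc k)) (log_event n m p vbl A (Suc k) S))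
      = bind_pmf (cond_pmf (map_pmf last (cond_pmf ?R ?L)) ?P) (gprs_step n m p vbl A)"
    unfolding gprs_run.simps using log xs by (intro last_cond_bind_snoc) auto
  also have "\<dots> = bind_pmf (cond_pmf (mu n p) (?E \<inter> ?P)) (gprs_step n m p vbl A)"
    using last_xs unfolding IH by (subst cond_cond_pmf) auto
  also have "\<dots> = cond_pmf (mu n p) ?F"
    using last_xs by (intro round_cond_mu) auto
  finally have "map_pmf last (cond_pmf (gprs_run n m p vbl A (Suc k)) (log_event n m p vbl A (Suc k) S))
      = cond_pmf (mu n p) ?F" .
  moreover have "last xs \<in> ?F"
    using last_xs resamples_subset_avoiding by blast
  ultimately show ?case
    using last_xs by auto
qed

end

theorem lemma25:
  fixes n m :: nat and p :: "nat \<Rightarrow> 'a pmf" and vbl :: "nat \<Rightarrow> nat set"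
    and A :: "nat \<Rightarrow> (nat \<Rightarrow> 'a) set" and l :: nat and S :: "nat \<Rightarrow> nat set"
  assumes vbl_sub: "\<forall>i<m. vbl i \<subseteq> {..<n}"
    and determined: "\<forall>i<m. \<forall>\<sigma> \<tau>. (\<forall>j\<in>vbl i. \<sigma> j = \<tau> j) \<longrightarrow> (\<sigma> \<in> A i \<longleftrightarrow> \<tau> \<in> A i)"
    and l_pos: "l \<ge> 1"
    and possible: "measure_pmf.prob (gprs_run n m p vbl A l) (log_event n m p vbl A l S) > 0"
  shows "map_pmf last (cond_pmf (gprs_run n m p vbl A l) (log_event n m p vbl A l S)) =
         cond_pmf (mu n p) {\<sigma>. \<forall>i \<in> {..<m} - Gamma_plus m vbl (S l). \<sigma> \<notin> A i}"
proof -
  have "set_pmf (gprs_run n m p vbl A l) \<inter> log_event n m p vbl A l S \<noteq> {}"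
    using possible measure_pmf_zero_iff[of "gprs_run n m p vbl A l"] by (metis less_irrefl)
  from last_cond_gprs_run[OF vbl_sub determined this] l_pos show ?thesis
    by (simp add: avoiding_def)
qed

end
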